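(* Let $S_1$ and $S_2$ be two disjoint sets of cells of an $n\times n$ array, each forming a Hamilton cycle. Then for any positive integers $t$ and $s$ with $s>t+2n$, the cells of $S_1\cup S_2$ can be filled with nonzero integers so that the resulting (partial) array is shiftable, has support $\{s+i,\ t+i\mid 1\le i\le 2n\}$ (each of these $4n$ absolute values occurring exactly once), and the four entries in each row and in each column sum to $0$.
   Context: Cells of an $n\times n$ array are identified with edges of $K_{n,n}$ (cell $(i,j)$ ↔ edge $\{a_i,b_j\}$); a set of cells forms a Hamilton cycle if the corresponding edge set is a single cycle of length $2n$. The support of an array is the set of absolute values of its entries. An array is shiftable if each row and each column contains the same number of positive and negative entries. *)

theory Defs
  imports Main
begin

text \<open>Cell (i,j) of an n x n array (i,j < n) corresponds to the edge {a_i, b_j} of K_{n,n}.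
  Vertices of K_{n,n}: Inl i = a_i (row i), Inr j = b_j (column j).\<close>

definition cell_edge :: "nat + nat \<Rightarrow> nat + nat \<Rightarrow> nat \<times> nat \<Rightarrow> bool" where
  "cell_edge u v c \<longleftrightarrow> (u = Inl (fst c) \<and> v = Inr (snd c)) \<or> (u = Inr (snd c) \<and> v = Inl (fst c))"

definition hamilton_cycle :: "nat \<Rightarrow> (nat \<times> nat) set \<Rightarrow> bool" where
  "hamilton_cycle n S \<longleftrightarrow>
    (\<exists>vs. distinct vs \<and> set vs = Inl ` {..<n} \<union> Inr ` {..<n} \<and> length vs \<ge> 3 \<and>
      (\<forall>k < length vs. \<exists>c. cell_edge (vs ! k) (vs ! ((k + 1) mod length vs)) c) \<and>
      S = {c. \<exists>k < length vs. cell_edge (vs ! k) (vs ! ((k + 1) mod length vs)) c})"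

text \<open>Shiftable: each row and column has as many positive as negative entries
  (empty cells are represented by 0).\<close>

definition shiftable :: "nat \<Rightarrow> (nat \<Rightarrow> nat \<Rightarrow> int) \<Rightarrow> bool" where
  "shiftable n A \<longleftrightarrow>
    (\<forall>i<n. card {j. j < n \<and> A i j > 0} = card {j. j < n \<and> A i j < 0}) \<and>
    (\<forall>j<n. card {i. i < n \<and> A i j > 0} = card {i. i < n \<and> A i j < 0})"

end

theory Submission
  imports Defs
begin

text \<open>Traverse each Hamilton cycle from the vertex \<open>a\<^sub>0\<close> and give its \<open>k\<close>-th edge
  (\<open>k = 0, \<dots>, 2n - 1\<close>) the value \<open>(-1)\<^sup>k (a + k + 1)\<close>, with \<open>a = s\<close> for the first cycle and
  \<open>a = t\<close> for the second. Every vertex other than \<open>a\<^sub>0\<close> lies on two consecutive edges, whose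
  values add up to \<open>(-1)\<^sup>p\<close> where the parity of the position \<open>p\<close> is that of the side of the
  bipartition the vertex lies on; at \<open>a\<^sub>0\<close> the edges \<open>0\<close> and \<open>2n - 1\<close> give \<open>1 - 2n\<close>.
  So the line sums of such a labelling depend on neither the cycle nor \<open>a\<close>, and subtracting the
  labelling of the second cycle from that of the first makes all row and column sums vanish.
  Each cycle contributes one positive and one negative entry to every line, and \<open>s > t + 2n\<close>
  keeps the two ranges of absolute values apart.\<close>

definition edge_cell :: "nat + nat \<Rightarrow> nat + nat \<Rightarrow> nat \<times> nat" where
  "edge_cell u v = (case u of Inl i \<Rightarrow> (i, projr v) | Inr j \<Rightarrow> (projl v, j))"

lemma cell_edge_iff: "cell_edge u v c \<longleftrightarrow> isl u \<noteq> isl v \<and> c = edge_cell u v"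
  unfolding cell_edge_def edge_cell_def by (cases u; cases v) auto

definition incident :: "nat + nat \<Rightarrow> nat \<times> nat \<Rightarrow> bool" where
  "incident u c \<longleftrightarrow> u = Inl (fst c) \<or> u = Inr (snd c)"

lemma cell_edge_incident: "cell_edge u v c \<Longrightarrow> incident w c \<longleftrightarrow> w = u \<or> w = v"
  unfolding cell_edge_def incident_def by auto

definition line :: "nat \<Rightarrow> nat + nat \<Rightarrow> (nat \<times> nat) set" where
  "line n u = {c \<in> {..<n} \<times> {..<n}. incident u c}"

lemma finite_line: "finite (line n u)"
  unfolding line_def by (rule finite_subset[of _ "{..<n} \<times> {..<n}"]) auto

lemma line_Inl: "i < n \<Longrightarrow> line n (Inl i) = Pair i ` {..<n}"
  unfolding line_def incident_def by auto

lemma line_Inr: "j < n \<Longrightarrow> line n (Inr j) = (\<lambda>i. (i, j)) ` {..<n}"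
  unfolding line_def incident_def by auto

lemma sum_line_Inl: "i < n \<Longrightarrow> (\<Sum>c\<in>line n (Inl i). g c) = (\<Sum>j<n. g (i, j))"
  by (simp add: line_Inl sum.reindex inj_on_def)

lemma sum_line_Inr: "j < n \<Longrightarrow> (\<Sum>c\<in>line n (Inr j). g c) = (\<Sum>i<n. g (i, j))"
  by (simp add: line_Inr sum.reindex inj_on_def)

lemma card_line_Inl: "i < n \<Longrightarrow> card {c \<in> line n (Inl i). P c} = card {j. j < n \<and> P (i, j)}"
proof -
  assume "i < n"
  then have "{c \<in> line n (Inl i). P c} = Pair i ` {j. j < n \<and> P (i, j)}"
    by (auto simp: line_Inl)
  then show ?thesis by (simp add: card_image inj_on_def)
qed

lemma card_line_Inr: "j < n \<Longrightarrow> card {c \<in> line n (Inr j). P c} = card {i. i < n \<and> P (i, j)}"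
proof -
  assume "j < n"
  then have "{c \<in> line n (Inr j). P c} = (\<lambda>i. (i, j)) ` {i. i < n \<and> P (i, j)}"
    by (auto simp: line_Inr)
  then show ?thesis by (simp add: card_image inj_on_def)
qed

lemma card_filter_pair: "x \<noteq> y \<Longrightarrow> P x \<longleftrightarrow> \<not> P y \<Longrightarrow> card {c \<in> {x, y}. P c} = 1"
proof -
  assume "x \<noteq> y" and "P x \<longleftrightarrow> \<not> P y"
  then have "{c \<in> {x, y}. P c} = (if P x then {x} else {y})" by auto
  then show ?thesis by simp
qed

definition cyclic_steps :: "'a list \<Rightarrow> ('a \<times> 'a) set" where
  "cyclic_steps xs = set (zip xs (rotate1 xs))"

lemma cyclic_steps_conv_nth:
  "cyclic_steps xs = {(xs ! k, xs ! ((k + 1) mod length xs)) | k. k < length xs}"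
  unfolding cyclic_steps_def set_zip by (auto simp: nth_rotate1)

lemma cyclic_steps_rotate1: "cyclic_steps (rotate1 xs) = cyclic_steps xs"
proof (cases xs rule: remdups_adj.cases)
  case (3 x y ys)
  then show ?thesis
    using zip_append[of "y # ys" "ys @ [x]" "[x]" "[y]"] by (auto simp: cyclic_steps_def)
qed (auto simp: cyclic_steps_def)

lemma cyclic_steps_rotate: "cyclic_steps (rotate r xs) = cyclic_steps xs"
  by (induction r) (simp_all add: cyclic_steps_rotate1)

lemma ball_cyclic_steps:
  "(\<forall>(u, v) \<in> cyclic_steps xs. P u v) \<longleftrightarrow> (\<forall>k < length xs. P (xs ! k) (xs ! ((k + 1) mod length xs)))"
  unfolding cyclic_steps_conv_nth by blast

lemma bex_cyclic_steps:
  "(\<exists>(u, v) \<in> cyclic_steps xs. P u v) \<longleftrightarrow> (\<exists>k < length xs. P (xs ! k) (xs ! ((k + 1) mod length xs)))"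
  unfolding cyclic_steps_conv_nth by blast

lemma hamilton_cycle_iff_steps:
  "hamilton_cycle n S \<longleftrightarrow>
    (\<exists>vs. distinct vs \<and> set vs = Inl ` {..<n} \<union> Inr ` {..<n} \<and> length vs \<ge> 3 \<and>
      (\<forall>(u, v) \<in> cyclic_steps vs. \<exists>c. cell_edge u v c) \<and>
      S = {c. \<exists>(u, v) \<in> cyclic_steps vs. cell_edge u v c})"
  unfolding hamilton_cycle_def ball_cyclic_steps bex_cyclic_steps ..

definition cyclic_pred :: "nat \<Rightarrow> nat \<Rightarrow> nat" where
  "cyclic_pred L p = (if p = 0 then L - 1 else p - 1)"

lemma cyclic_pred_less: "p < L \<Longrightarrow> cyclic_pred L p < L"
  unfolding cyclic_pred_def by auto

lemma Suc_mod_eq_iff_cyclic_pred: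
  "k < L \<Longrightarrow> p < L \<Longrightarrow> Suc k mod L = p \<longleftrightarrow> k = cyclic_pred L p"
  unfolding cyclic_pred_def by (cases "Suc k = L") auto

lemma even_cyclic_pred: "even L \<Longrightarrow> p < L \<Longrightarrow> even (cyclic_pred L p) \<longleftrightarrow> odd p"
  unfolding cyclic_pred_def by (auto simp: even_diff_nat)

lemma Suc_Suc_mod_neq: "3 \<le> L \<Longrightarrow> k < L \<Longrightarrow> Suc (Suc k) mod L \<noteq> k"
  by (cases "Suc (Suc k) < L") (auto simp: mod_if)

definition alt_label :: "int \<Rightarrow> nat \<Rightarrow> int" where
  "alt_label a k = (-1) ^ k * (a + int k + 1)"

lemma abs_alt_label: "a \<ge> 0 \<Longrightarrow> \<bar>alt_label a k\<bar> = a + int k + 1"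
  unfolding alt_label_def by (simp add: abs_mult)

lemma alt_label_neq_0: "a \<ge> 0 \<Longrightarrow> alt_label a k \<noteq> 0"
  unfolding alt_label_def by simp

lemma alt_label_pos_iff: "a \<ge> 0 \<Longrightarrow> alt_label a k > 0 \<longleftrightarrow> even k"
  unfolding alt_label_def by (cases "even k") auto

lemma alt_label_neg_iff: "a \<ge> 0 \<Longrightarrow> alt_label a k < 0 \<longleftrightarrow> odd k"
  unfolding alt_label_def by (cases "even k") auto

lemma bij_betw_shift_interval:
  "bij_betw (\<lambda>k. a + int k + 1) {..<m} {a + k | k. 1 \<le> k \<and> k \<le> int m}"
proof (rule bij_betw_imageI)
  show "inj_on (\<lambda>k. a + int k + 1) {..<m}" by (simp add: inj_on_def)
  show "(\<lambda>k. a + int k + 1) ` {..<m} = {a + k | k. 1 \<le> k \<and> k \<le> int m}"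
  proof (intro equalityI subsetI)
    fix x assume "x \<in> {a + k | k. 1 \<le> k \<and> k \<le> int m}"
    then obtain k where "x = a + k" "1 \<le> k" "k \<le> int m" by blast
    then show "x \<in> (\<lambda>k. a + int k + 1) ` {..<m}"
      by (intro image_eqI[of _ _ "nat (k - 1)"]) auto
  qed force
qed

lemma alt_label_add_cyclic_pred:
  assumes "even L" and "p < L"
  shows "alt_label a p + alt_label a (cyclic_pred L p) = (if p = 0 then 1 - int L else (-1) ^ p)"
proof (cases "p = 0")
  case True
  with assms have "odd (L - 1)" and "int (L - 1) = int L - 1"
    by auto
  with True show ?thesis by (simp add: alt_label_def cyclic_pred_def)
next
  case False
  then obtain q where "p = Suc q" by (metis not0_implies_Suc)
  then show ?thesis by (simp add: alt_label_def cyclic_pred_def algebra_simps)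
qed

text \<open>The line sum, at a vertex \<open>u\<close>, of the alternating labelling of a Hamilton cycle
  traversed from \<open>a\<^sub>0\<close>: by \<open>alt_label_add_cyclic_pred\<close> it depends only on \<open>u\<close>.\<close>

definition cycle_defect :: "nat \<Rightarrow> nat + nat \<Rightarrow> int" where
  "cycle_defect n u = (if u = Inl 0 then 1 - 2 * int n else if isl u then 1 else -1)"

locale hamilton_walk =
  fixes n :: nat and vs :: "(nat + nat) list"
  assumes distinct_walk: "distinct vs"
    and set_walk: "set vs = Inl ` {..<n} \<union> Inr ` {..<n}"
    and length_walk_ge: "3 \<le> length vs"
    and steps_are_edges: "\<forall>(u, v) \<in> cyclic_steps vs. \<exists>c. cell_edge u v c"
    and walk_starts: "vs ! 0 = Inl 0"
begin

abbreviation (input) L :: nat where "L \<equiv> length vs"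

lemma length_walk: "L = 2 * n"
proof -
  have "card (Inl ` {..<n} \<union> Inr ` {..<n} :: (nat + nat) set) = n + n"
    by (subst card_Un_disjoint) (auto simp: card_image)
  with distinct_card[OF distinct_walk] set_walk show ?thesis by simp
qed

lemma step_changes_side: "k < L \<Longrightarrow> isl (vs ! k) \<noteq> isl (vs ! (Suc k mod L))"
  using steps_are_edges by (auto simp: ball_cyclic_steps cell_edge_iff)

lemma isl_nth_walk: "k < L \<Longrightarrow> isl (vs ! k) \<longleftrightarrow> even k"
proof (induction k)
  case 0
  then show ?case using walk_starts by simp
next
  case (Suc k)
  then show ?case using step_changes_side[of k] by simp
qed

lemma length_walk_pos: "0 < L"
  using length_walk_ge by linarith

lemma Suc_mod_length_less [simp]: "Suc k mod L < L"
  using length_walk_pos by simp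

lemma nth_walk_eq_iff: "k < L \<Longrightarrow> p < L \<Longrightarrow> vs ! k = vs ! p \<longleftrightarrow> k = p"
  using distinct_walk by (simp add: nth_eq_iff_index_eq)

definition walk_cell :: "nat \<Rightarrow> nat \<times> nat" where
  "walk_cell k = edge_cell (vs ! k) (vs ! (Suc k mod L))"

lemma cell_edge_walk_iff:
  "k < L \<Longrightarrow> cell_edge (vs ! k) (vs ! (Suc k mod L)) c \<longleftrightarrow> c = walk_cell k"
  unfolding cell_edge_iff walk_cell_def using step_changes_side by blast

lemma cell_edge_walk_cell: "k < L \<Longrightarrow> cell_edge (vs ! k) (vs ! (Suc k mod L)) (walk_cell k)"
  by (simp add: cell_edge_walk_iff)

lemma walk_cells: "{c. \<exists>(u, v) \<in> cyclic_steps vs. cell_edge u v c} = walk_cell ` {..<L}"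
  by (auto simp: bex_cyclic_steps cell_edge_walk_iff)

lemma walk_cell_in_grid: "k < L \<Longrightarrow> walk_cell k \<in> {..<n} \<times> {..<n}"
proof -
  assume "k < L"
  then have "vs ! k \<in> set vs" and "vs ! (Suc k mod L) \<in> set vs" by simp_all
  with cell_edge_walk_cell[OF \<open>k < L\<close>] show ?thesis
    unfolding set_walk cell_edge_def by (auto simp: mem_Times_iff)
qed

lemma incident_walk_cell:
  assumes "k < L" and "p < L"
  shows "incident (vs ! p) (walk_cell k) \<longleftrightarrow> k = p \<or> k = cyclic_pred L p"
proof -
  have "incident (vs ! p) (walk_cell k) \<longleftrightarrow> p = k \<or> p = Suc k mod L"
    using cell_edge_incident[OF cell_edge_walk_cell] nth_walk_eq_iff assms
    by (metis Suc_mod_length_less)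
  also have "\<dots> \<longleftrightarrow> k = p \<or> k = cyclic_pred L p"
    using Suc_mod_eq_iff_cyclic_pred[OF assms] by auto
  finally show ?thesis .
qed

lemma inj_walk_cell: "inj_on walk_cell {..<L}"
proof (rule inj_onI)
  fix k k' assume k: "k \<in> {..<L}" and k': "k' \<in> {..<L}" and eq: "walk_cell k = walk_cell k'"
  define q where "q = Suc k mod L"
  have q: "q < L" and pred_q: "cyclic_pred L q = k"
    using Suc_mod_eq_iff_cyclic_pred[of k L q] k by (simp_all add: q_def)
  show "k = k'"
  proof (rule ccontr)
    assume "k \<noteq> k'"
    have "incident (vs ! k) (walk_cell k')" and "incident (vs ! q) (walk_cell k')"
      using incident_walk_cell[of k k] incident_walk_cell[of k q] k q pred_q
      unfolding eq by simp_all
    then have "k' = k \<or> k' = cyclic_pred L k" and "k' = q \<or> k' = k"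
      using incident_walk_cell[of k' k] incident_walk_cell[of k' q] k k' q pred_q by simp_all
    with \<open>k \<noteq> k'\<close> have "k' = cyclic_pred L k" and "k' = q" by auto
    have "Suc (Suc k) mod L = Suc q mod L"
      by (simp add: q_def mod_Suc_eq)
    also have "\<dots> = k"
      using Suc_mod_eq_iff_cyclic_pred[of k' L k] k k' \<open>k' = cyclic_pred L k\<close> \<open>k' = q\<close> by simp
    finally have "Suc (Suc k) mod L = k" .
    with Suc_Suc_mod_neq length_walk_ge k show False by simp
  qed
qed

lemma line_inter_walk_cells:
  assumes "p < L"
  shows "line n (vs ! p) \<inter> walk_cell ` {..<L} = {walk_cell p, walk_cell (cyclic_pred L p)}"
proof -
  have "line n (vs ! p) \<inter> walk_cell ` {..<L} =
      walk_cell ` {k \<in> {..<L}. incident (vs ! p) (walk_cell k)}"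
  proof (intro equalityI subsetI)
    fix c assume "c \<in> walk_cell ` {k \<in> {..<L}. incident (vs ! p) (walk_cell k)}"
    then obtain k where "k < L" "incident (vs ! p) (walk_cell k)" "c = walk_cell k" by blast
    then show "c \<in> line n (vs ! p) \<inter> walk_cell ` {..<L}"
      using walk_cell_in_grid[of k] unfolding line_def by blast
  qed (auto simp: line_def)
  also have "{k \<in> {..<L}. incident (vs ! p) (walk_cell k)} = {p, cyclic_pred L p}"
    using incident_walk_cell[OF _ assms] assms cyclic_pred_less[OF assms] by auto
  finally show ?thesis by simp
qed

definition walk_labelling :: "int \<Rightarrow> nat \<times> nat \<Rightarrow> int" where
  "walk_labelling a c =
    (if c \<in> walk_cell ` {..<L} then alt_label a (the_inv_into {..<L} walk_cell c) else 0)"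

lemma walk_labelling_walk_cell: "k < L \<Longrightarrow> walk_labelling a (walk_cell k) = alt_label a k"
  by (simp add: walk_labelling_def the_inv_into_f_f[OF inj_walk_cell])

lemma walk_labelling_eq_0: "c \<notin> walk_cell ` {..<L} \<Longrightarrow> walk_labelling a c = 0"
  by (simp add: walk_labelling_def)

lemma walk_labelling_neq_0_iff: "a \<ge> 0 \<Longrightarrow> walk_labelling a c \<noteq> 0 \<longleftrightarrow> c \<in> walk_cell ` {..<L}"
  by (cases "c \<in> walk_cell ` {..<L}")
    (auto simp: walk_labelling_walk_cell walk_labelling_eq_0 alt_label_neq_0)

lemma bij_betw_abs_walk_labelling:
  assumes "a \<ge> 0"
  shows "bij_betw (\<lambda>c. \<bar>walk_labelling a c\<bar>) (walk_cell ` {..<L})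
    {a + k | k. 1 \<le> k \<and> k \<le> 2 * int n}"
proof -
  have "bij_betw (\<lambda>k. a + int k + 1) {..<L} {a + k | k. 1 \<le> k \<and> k \<le> 2 * int n}"
    using bij_betw_shift_interval[of a L] by (simp add: length_walk)
  then have "bij_betw ((\<lambda>c. \<bar>walk_labelling a c\<bar>) \<circ> walk_cell) {..<L}
      {a + k | k. 1 \<le> k \<and> k \<le> 2 * int n}"
    by (rule bij_betw_cong[THEN iffD1, rotated])
      (simp add: walk_labelling_walk_cell abs_alt_label assms)
  then show ?thesis
    using bij_betw_comp_iff inj_on_imp_bij_betw[OF inj_walk_cell] by blast
qed

lemma nth_walk_zero_iff: "p < L \<Longrightarrow> vs ! p = Inl 0 \<longleftrightarrow> p = 0"
  using nth_walk_eq_iff[of p 0] walk_starts length_walk_pos by simp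

lemma walk_cell_cyclic_pred_neq: "p < L \<Longrightarrow> walk_cell (cyclic_pred L p) \<noteq> walk_cell p"
  using inj_on_eq_iff[OF inj_walk_cell] cyclic_pred_less[of p L] length_walk_ge
  by (auto simp: cyclic_pred_def)

lemma sum_line_walk_labelling:
  assumes "u \<in> set vs"
  shows "(\<Sum>c\<in>line n u. walk_labelling a c) = cycle_defect n u"
proof -
  obtain p where p: "p < L" "vs ! p = u" using assms by (auto simp: in_set_conv_nth)
  define q where "q = cyclic_pred L p"
  have "(\<Sum>c\<in>line n u. walk_labelling a c) = (\<Sum>c\<in>line n u \<inter> walk_cell ` {..<L}. walk_labelling a c)"
    by (rule sum.mono_neutral_right) (auto simp: finite_line walk_labelling_eq_0)
  also have "\<dots> = walk_labelling a (walk_cell p) + walk_labelling a (walk_cell q)"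
    using line_inter_walk_cells[OF p(1)] walk_cell_cyclic_pred_neq[OF p(1)] p(2)
    by (simp add: q_def)
  also have "\<dots> = alt_label a p + alt_label a q"
    using cyclic_pred_less[OF p(1)] p(1) by (simp add: walk_labelling_walk_cell q_def)
  also have "\<dots> = cycle_defect n u"
    using alt_label_add_cyclic_pred[of L p a] p isl_nth_walk[OF p(1)] nth_walk_zero_iff[OF p(1)]
    by (auto simp: q_def cycle_defect_def length_walk)
  finally show ?thesis .
qed

lemma filter_line_walk_labelling:
  assumes "p < L" and "\<not> P 0"
  shows "{c \<in> line n (vs ! p). P (walk_labelling a c)} =
    {c \<in> {walk_cell p, walk_cell (cyclic_pred L p)}. P (walk_labelling a c)}"
proof -
  have "c \<in> walk_cell ` {..<L}" if "P (walk_labelling a c)" for c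
    using that assms(2) walk_labelling_eq_0 by metis
  then have "{c \<in> line n (vs ! p). P (walk_labelling a c)} =
      {c \<in> line n (vs ! p) \<inter> walk_cell ` {..<L}. P (walk_labelling a c)}"
    by blast
  then show ?thesis
    by (simp only: line_inter_walk_cells[OF assms(1)])
qed

lemma card_line_walk_labelling:
  assumes "u \<in> set vs" and "a \<ge> 0"
  shows "card {c \<in> line n u. walk_labelling a c > 0} = 1"
    and "card {c \<in> line n u. walk_labelling a c < 0} = 1"
proof -
  obtain p where p: "p < L" "vs ! p = u" using assms by (auto simp: in_set_conv_nth)
  define q where "q = cyclic_pred L p"
  have "q < L" and "walk_cell p \<noteq> walk_cell q" and "even q \<longleftrightarrow> odd p"
    using cyclic_pred_less[OF p(1)] walk_cell_cyclic_pred_neq[OF p(1)] even_cyclic_pred[OF _ p(1)]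
    by (simp_all add: q_def length_walk)
  then have signs: "walk_labelling a (walk_cell p) > 0 \<longleftrightarrow> \<not> walk_labelling a (walk_cell q) > 0"
    "walk_labelling a (walk_cell p) < 0 \<longleftrightarrow> \<not> walk_labelling a (walk_cell q) < 0"
    using assms(2) p(1)
    by (simp_all add: walk_labelling_walk_cell alt_label_pos_iff alt_label_neg_iff)
  show "card {c \<in> line n u. walk_labelling a c > 0} = 1"
    using filter_line_walk_labelling[OF p(1), of "\<lambda>x. x > 0"]
      card_filter_pair[of _ _ "\<lambda>x. walk_labelling a x > 0", OF _ signs(1)]
      \<open>walk_cell p \<noteq> walk_cell q\<close> p(2) by (simp add: q_def)
  show "card {c \<in> line n u. walk_labelling a c < 0} = 1"
    using filter_line_walk_labelling[OF p(1), of "\<lambda>x. x < 0"]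
      card_filter_pair[of _ _ "\<lambda>x. walk_labelling a x < 0", OF _ signs(2)]
      \<open>walk_cell p \<noteq> walk_cell q\<close> p(2) by (simp add: q_def)
qed

end

lemma hamilton_cycle_obtains_walk:
  assumes "hamilton_cycle n S"
  obtains vs where "hamilton_walk n vs" and "S = hamilton_walk.walk_cell vs ` {..<length vs}"
proof -
  obtain ws where ws: "distinct ws" "set ws = Inl ` {..<n} \<union> Inr ` {..<n}" "3 \<le> length ws"
    "\<forall>(u, v) \<in> cyclic_steps ws. \<exists>c. cell_edge u v c"
    "S = {c. \<exists>(u, v) \<in> cyclic_steps ws. cell_edge u v c}"
    using assms unfolding hamilton_cycle_iff_steps by blast
  have "n \<noteq> 0"
  proof
    assume "n = 0"
    with ws(2) have "ws = []" by simp
    with ws(3) show False by simp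
  qed
  then have "Inl 0 \<in> set ws" using ws(2) by simp
  then obtain p where p: "p < length ws" "ws ! p = Inl 0" by (auto simp: in_set_conv_nth)
  have "rotate p ws ! 0 = Inl 0"
    using p nth_rotate[of 0 ws p] by (cases ws) simp_all
  define vs where "vs = rotate p ws"
  have walk: "hamilton_walk n vs"
    using ws \<open>rotate p ws ! 0 = Inl 0\<close> by unfold_locales (simp_all add: vs_def cyclic_steps_rotate)
  moreover have "S = hamilton_walk.walk_cell vs ` {..<length vs}"
    using ws(5) hamilton_walk.walk_cells[OF walk] by (simp add: vs_def cyclic_steps_rotate)
  ultimately show thesis by (rule that)
qed

definition cycle_labelling :: "nat \<Rightarrow> (nat \<times> nat) set \<Rightarrow> int \<Rightarrow> (nat \<times> nat \<Rightarrow> int) \<Rightarrow> bool" where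
  "cycle_labelling n S a f \<longleftrightarrow>
    (\<forall>c. f c \<noteq> 0 \<longleftrightarrow> c \<in> S) \<and>
    bij_betw (\<lambda>c. \<bar>f c\<bar>) S {a + k | k. 1 \<le> k \<and> k \<le> 2 * int n} \<and>
    (\<forall>u \<in> Inl ` {..<n} \<union> Inr ` {..<n}.
       (\<Sum>c\<in>line n u. f c) = cycle_defect n u \<and>
       card {c \<in> line n u. f c > 0} = 1 \<and> card {c \<in> line n u. f c < 0} = 1)"

lemma cycle_labellingD:
  assumes "cycle_labelling n S a f"
  shows "f c \<noteq> 0 \<longleftrightarrow> c \<in> S"
    and "bij_betw (\<lambda>c. \<bar>f c\<bar>) S {a + k | k. 1 \<le> k \<and> k \<le> 2 * int n}"
    and "u \<in> Inl ` {..<n} \<union> Inr ` {..<n} \<Longrightarrow> (\<Sum>c\<in>line n u. f c) = cycle_defect n u"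
    and "u \<in> Inl ` {..<n} \<union> Inr ` {..<n} \<Longrightarrow> card {c \<in> line n u. f c > 0} = 1"
    and "u \<in> Inl ` {..<n} \<union> Inr ` {..<n} \<Longrightarrow> card {c \<in> line n u. f c < 0} = 1"
  using assms unfolding cycle_labelling_def by blast+

lemma hamilton_cycle_labelling_exists:
  assumes "hamilton_cycle n S" and "a \<ge> 0"
  shows "\<exists>f. cycle_labelling n S a f"
proof -
  obtain vs where walk: "hamilton_walk n vs"
    and S: "S = hamilton_walk.walk_cell vs ` {..<length vs}"
    using hamilton_cycle_obtains_walk[OF assms(1)] .
  interpret hamilton_walk n vs by (fact walk)
  have "cycle_labelling n S a (walk_labelling a)"
    unfolding cycle_labelling_def S using assms(2) set_walk
    by (simp add: walk_labelling_neq_0_iff bij_betw_abs_walk_labelling sum_line_walk_labelling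
        card_line_walk_labelling)
  then show ?thesis by blast
qed

lemma card_pos_diff:
  fixes f g :: "'a \<Rightarrow> int"
  assumes "finite X" and "\<And>c. f c = 0 \<or> g c = 0"
  shows "card {c \<in> X. f c - g c > 0} = card {c \<in> X. f c > 0} + card {c \<in> X. g c < 0}"
proof -
  have "f c - g c > 0 \<longleftrightarrow> f c > 0 \<or> g c < 0" and "\<not> (f c > 0 \<and> g c < 0)" for c
    using assms(2)[of c] by auto
  then have "{c \<in> X. f c - g c > 0} = {c \<in> X. f c > 0} \<union> {c \<in> X. g c < 0}"
    and "{c \<in> X. f c > 0} \<inter> {c \<in> X. g c < 0} = {}"
    by auto
  then show ?thesis
    using assms(1) by (simp add: card_Un_disjoint)
qed

lemma cycle_labelling_disjoint_supports:
  "cycle_labelling n S a f \<Longrightarrow> cycle_labelling n T b g \<Longrightarrow> S \<inter> T = {} \<Longrightarrow> f c = 0 \<or> g c = 0"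
  using cycle_labellingD(1)[of n S a f c] cycle_labellingD(1)[of n T b g c] by blast

lemma line_difference_cycle_labellings:
  assumes f: "cycle_labelling n S a f" and g: "cycle_labelling n T b g" and "S \<inter> T = {}"
    and u: "u \<in> Inl ` {..<n} \<union> Inr ` {..<n}"
  shows "(\<Sum>c\<in>line n u. f c - g c) = 0"
    and "card {c \<in> line n u. f c - g c > 0} = 2"
    and "card {c \<in> line n u. f c - g c < 0} = 2"
proof -
  have disjoint: "f c = 0 \<or> g c = 0" "g c = 0 \<or> f c = 0" for c
    using cycle_labelling_disjoint_supports[OF f g \<open>S \<inter> T = {}\<close>] by blast+
  have "(\<Sum>c\<in>line n u. f c) = cycle_defect n u" "(\<Sum>c\<in>line n u. g c) = cycle_defect n u"
    "card {c \<in> line n u. f c > 0} = 1" "card {c \<in> line n u. f c < 0} = 1"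
    "card {c \<in> line n u. g c > 0} = 1" "card {c \<in> line n u. g c < 0} = 1"
    using cycle_labellingD(3-5)[OF f u] cycle_labellingD(3-5)[OF g u] by simp_all
  moreover have "{c \<in> line n u. f c - g c < 0} = {c \<in> line n u. g c - f c > 0}" by auto
  ultimately show "(\<Sum>c\<in>line n u. f c - g c) = 0"
    and "card {c \<in> line n u. f c - g c > 0} = 2"
    and "card {c \<in> line n u. f c - g c < 0} = 2"
    using card_pos_diff[OF finite_line disjoint(1)] card_pos_diff[OF finite_line disjoint(2)]
    by (simp_all add: sum_subtractf)
qed

lemma array_difference_cycle_labellings:
  assumes f: "cycle_labelling n S a f" and g: "cycle_labelling n T b g" and "S \<inter> T = {}"
  shows "shiftable n (\<lambda>i j. f (i, j) - g (i, j))"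
    and "\<forall>i<n. (\<Sum>j<n. f (i, j) - g (i, j)) = 0"
    and "\<forall>j<n. (\<Sum>i<n. f (i, j) - g (i, j)) = 0"
proof -
  have rows: "(\<Sum>j<n. f (i, j) - g (i, j)) = 0" "card {j. j < n \<and> f (i, j) - g (i, j) > 0} = 2"
    "card {j. j < n \<and> f (i, j) - g (i, j) < 0} = 2" if "i < n" for i
    using line_difference_cycle_labellings[OF f g \<open>S \<inter> T = {}\<close>, of "Inl i"] that
      sum_line_Inl[OF that, of "\<lambda>c. f c - g c"]
      card_line_Inl[OF that, of "\<lambda>c. f c - g c > 0"] card_line_Inl[OF that, of "\<lambda>c. f c - g c < 0"]
    by simp_all
  have cols: "(\<Sum>i<n. f (i, j) - g (i, j)) = 0" "card {i. i < n \<and> f (i, j) - g (i, j) > 0} = 2"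
    "card {i. i < n \<and> f (i, j) - g (i, j) < 0} = 2" if "j < n" for j
    using line_difference_cycle_labellings[OF f g \<open>S \<inter> T = {}\<close>, of "Inr j"] that
      sum_line_Inr[OF that, of "\<lambda>c. f c - g c"]
      card_line_Inr[OF that, of "\<lambda>c. f c - g c > 0"] card_line_Inr[OF that, of "\<lambda>c. f c - g c < 0"]
    by simp_all
  show "shiftable n (\<lambda>i j. f (i, j) - g (i, j))"
    unfolding shiftable_def using rows(2,3) cols(2,3) by simp
  show "\<forall>i<n. (\<Sum>j<n. f (i, j) - g (i, j)) = 0" and "\<forall>j<n. (\<Sum>i<n. f (i, j) - g (i, j)) = 0"
    using rows(1) cols(1) by simp_all
qed

lemma bij_betw_abs_difference_cycle_labellings:
  assumes f: "cycle_labelling n S a f" and g: "cycle_labelling n T b g" and "S \<inter> T = {}"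
    and "a \<ge> b + 2 * int n"
  shows "bij_betw (\<lambda>c. \<bar>f c - g c\<bar>) (S \<union> T)
    ({a + k | k. 1 \<le> k \<and> k \<le> 2 * int n} \<union> {b + k | k. 1 \<le> k \<and> k \<le> 2 * int n})"
proof (rule bij_betw_combine)
  have "g c = 0" if "c \<in> S" for c
    using that cycle_labellingD(1)[OF g] \<open>S \<inter> T = {}\<close> by blast
  then show "bij_betw (\<lambda>c. \<bar>f c - g c\<bar>) S {a + k | k. 1 \<le> k \<and> k \<le> 2 * int n}"
    using cycle_labellingD(2)[OF f] by (simp cong: bij_betw_cong)
  have "f c = 0" if "c \<in> T" for c
    using that cycle_labellingD(1)[OF f] \<open>S \<inter> T = {}\<close> by blast
  then show "bij_betw (\<lambda>c. \<bar>f c - g c\<bar>) T {b + k | k. 1 \<le> k \<and> k \<le> 2 * int n}"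
    using cycle_labellingD(2)[OF g] by (simp cong: bij_betw_cong)
  show "{a + k | k. 1 \<le> k \<and> k \<le> 2 * int n} \<inter> {b + k | k. 1 \<le> k \<and> k \<le> 2 * int n} = {}"
    using \<open>a \<ge> b + 2 * int n\<close> by auto
qed

theorem lemma2p3:
  fixes n :: nat and S1 S2 :: "(nat \<times> nat) set" and s t :: int
  assumes "hamilton_cycle n S1" and "hamilton_cycle n S2" and "S1 \<inter> S2 = {}"
    and "t > 0" and "s > t + 2 * int n"
  shows "\<exists>A :: nat \<Rightarrow> nat \<Rightarrow> int.
     (\<forall>i j. (i, j) \<in> S1 \<union> S2 \<longleftrightarrow> A i j \<noteq> 0) \<and>
     shiftable n A \<and>
     bij_betw (\<lambda>(i, j). \<bar>A i j\<bar>) (S1 \<union> S2)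
        ({s + k | k. 1 \<le> k \<and> k \<le> 2 * int n} \<union> {t + k | k. 1 \<le> k \<and> k \<le> 2 * int n}) \<and>
     (\<forall>i<n. (\<Sum>j<n. A i j) = 0) \<and>
     (\<forall>j<n. (\<Sum>i<n. A i j) = 0)"
proof -
  obtain f where f: "cycle_labelling n S1 s f"
    using hamilton_cycle_labelling_exists[OF assms(1), of s] assms(4,5) by auto
  obtain g where g: "cycle_labelling n S2 t g"
    using hamilton_cycle_labelling_exists[OF assms(2), of t] assms(4) by auto
  define A where "A = (\<lambda>i j. f (i, j) - g (i, j))"
  have "(i, j) \<in> S1 \<union> S2 \<longleftrightarrow> A i j \<noteq> 0" for i j
    using cycle_labellingD(1)[OF f, of "(i, j)"] cycle_labellingD(1)[OF g, of "(i, j)"]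
      cycle_labelling_disjoint_supports[OF f g assms(3), of "(i, j)"]
    unfolding A_def by auto
  moreover have "shiftable n A" "\<forall>i<n. (\<Sum>j<n. A i j) = 0" "\<forall>j<n. (\<Sum>i<n. A i j) = 0"
    using array_difference_cycle_labellings[OF f g assms(3)] unfolding A_def .
  moreover have "bij_betw (\<lambda>(i, j). \<bar>A i j\<bar>) (S1 \<union> S2)
      ({s + k | k. 1 \<le> k \<and> k \<le> 2 * int n} \<union> {t + k | k. 1 \<le> k \<and> k \<le> 2 * int n})"
    using bij_betw_abs_difference_cycle_labellings[OF f g assms(3)] assms(5)
    by (simp add: A_def case_prod_beta')
  ultimately show ?thesis by blast
qed

end
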